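(* Let $N\in\mathbb N$, $F=\mathbb Z/N\mathbb Z$, $k\in\mathbb N$ and $m_1,\ldots,m_{2k}\in\mathbb N$ with $\sum_{\ell=1}^{2k}m_\ell=N$. Let $\sigma\in G_F$ be the configuration $\sigma=(1)^{m_1}(-1)^{m_2}\cdots(1)^{m_{2k-1}}(-1)^{m_{2k}}$, i.e. reading $\sigma_1,\sigma_2,\ldots,\sigma_N$ one sees $m_1$ entries $1$, then $m_2$ entries $-1$, etc. Then, with indices of the $m_j$ taken in $\mathbb Z/2k\mathbb Z$, \[\Delta A_F(\sigma)=\sum_{\ell=1}^{2k}\sum_{n=1}^{k}\Big(\delta_{m_\ell+\cdots+m_{\ell+2n-2}}-\delta_{m_\ell+\cdots+m_{\ell+2n-1}}\Big).\]
   Context: $G_F=\{-1,1\}^F$ (with $N\equiv0$ in $F$), $A_F(\sigma)_f=\sum_{j\in F}\sigma_j\sigma_{j+f}$, $(\Delta h)_f=\frac14(h_{f-1}-2h_f+h_{f+1})$ for $h\in\mathbb R^F$, and for an integer $x$, $\delta_x\in\mathbb R^F$ is the indicator function of the residue class $x\bmod N$. *)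

theory Defs
  imports Main "HOL.Real"
begin

text \<open>Functions on F = Z/NZ are represented as functions on int, read modulo N
  (they are only ever evaluated through residues / are N-periodic).\<close>

definition corrA :: "nat \<Rightarrow> (int \<Rightarrow> real) \<Rightarrow> int \<Rightarrow> real" where
  "corrA N \<sigma> f = (\<Sum>j\<in>{0..<int N}. \<sigma> j * \<sigma> (j + f))"

definition lapl :: "(int \<Rightarrow> real) \<Rightarrow> int \<Rightarrow> real" where
  "lapl h f = (h (f - 1) - 2 * h f + h (f + 1)) / 4"

definition deltaF :: "nat \<Rightarrow> int \<Rightarrow> int \<Rightarrow> real" where
  "deltaF N x f = (if f mod int N = x mod int N then 1 else 0)"

text \<open>index of m taken in Z/2kZ, with representatives 1..2k\<close>
definition cyc :: "nat \<Rightarrow> int \<Rightarrow> nat" where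
  "cyc k l = nat ((l - 1) mod int (2 * k) + 1)"

definition segsum :: "nat \<Rightarrow> (nat \<Rightarrow> nat) \<Rightarrow> nat \<Rightarrow> nat \<Rightarrow> int" where
  "segsum k m l r = (\<Sum>i<r. int (m (cyc k (int l + int i))))"

end

theory Submission
  imports Defs
begin

text \<open>Write \<open>D\<sigma> j = \<sigma> (j+1) - \<sigma> j\<close>. Summation by parts over one period gives
  \<open>\<Delta>A_F(\<sigma>) = -A_F(D\<sigma>)/4\<close>. For the block configuration, \<open>D\<sigma>\<close> consists of the jumps
  \<open>2(-1)^l \<delta>_(P l)\<close> at the block ends \<open>P l = m_1 + ... + m_l\<close>, and the correlation of two deltas
  is a delta, so \<open>\<Delta>A_F(\<sigma>)(f) = -\<Sum>_(l,l') (-1)^(l+l') \<delta>_(P l' - P l)(f)\<close>. Extending the partial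
  sums to \<open>\<int>\<close> so that they grow by \<open>N\<close> over each period \<open>2k\<close> turns the cyclic segment sums
  \<open>m_l + ... + m_(l+r-1)\<close> into differences of extended partial sums. Both double sums are then
  sums of one doubly \<open>2k\<close>-periodic function over a period square.\<close>

lemma periodic_add_mult:
  fixes h :: "int \<Rightarrow> 'a"
  assumes "\<And>x. h (x + p) = h x"
  shows "h (x + t * p) = h x"
proof -
  have nat_mult: "h (y + int n * p) = h y" for y n
  proof (induction n)
    case (Suc n)
    have "h (y + int (Suc n) * p) = h (y + int n * p + p)" by (simp add: algebra_simps)
    then show ?case using Suc assms by simp
  qed simp
  show ?thesis
  proof (cases "t \<ge> 0")
    case True
    then show ?thesis using nat_mult[of x "nat t"] by simp
  next
    case False
    then show ?thesis using nat_mult[of "x + t * p" "nat (- t)"] by simp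
  qed
qed

lemma periodic_mod:
  fixes h :: "int \<Rightarrow> 'a"
  assumes "\<And>x. h (x + p) = h x"
  shows "h (x mod p) = h x"
  using periodic_add_mult[where h = h and p = p, OF assms, of "x mod p" "x div p"] by (simp add: add.commute)

lemma sum_periodic_shift:
  fixes h :: "int \<Rightarrow> 'a::comm_monoid_add"
  assumes "\<And>x. h (x + p) = h x"
  shows "(\<Sum>j\<in>{0..<p}. h (j + a)) = (\<Sum>j\<in>{0..<p}. h j)"
proof (cases "p > 0")
  case True
  have "(\<Sum>j\<in>{0..<p}. h (j + a)) = (\<Sum>j\<in>{0..<p}. h ((j + a) mod p))"
    by (simp add: periodic_mod[where h = h, OF assms])
  also have "\<dots> = (\<Sum>j\<in>{0..<p}. h j)"
    by (rule sum.reindex_bij_witness[where i = "\<lambda>j. (j - a) mod p" and j = "\<lambda>j. (j + a) mod p"])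
       (use True in \<open>auto simp: mod_simps\<close>)
  finally show ?thesis .
qed simp

lemma sum_periodic_atLeastAtMost_nat:
  fixes g :: "int \<Rightarrow> 'a::comm_monoid_add"
  assumes "\<And>x. g (x + int n) = g x"
  shows "(\<Sum>l=1..n. g (int l)) = (\<Sum>j\<in>{0..<int n}. g j)"
proof -
  have "(\<Sum>l=1..n. g (int l)) = (\<Sum>j\<in>{0..<int n}. g (j + 1))"
    by (rule sum.reindex_bij_witness[where i = "\<lambda>j. nat j + 1" and j = "\<lambda>l. int l - 1"]) auto
  also have "\<dots> = (\<Sum>j\<in>{0..<int n}. g j)"
    by (rule sum_periodic_shift[where h = g, OF assms])
  finally show ?thesis .
qed

lemma sum_alternating_sign: "(\<Sum>l=1..n. 2 * (-1) ^ l :: real) = (-1) ^ n - 1"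
  by (induction n) auto

lemma sum_alternating_pairs:
  "(\<Sum>n=1..k. a (2*n - 1) - a (2*n)) = (\<Sum>r=1..2*k. (-1) ^ (r + 1) * (a r :: real))"
proof (induction k)
  case (Suc k)
  have "{1..2 * Suc k} = insert (2*k + 2) (insert (2*k + 1) {1..2*k})" by auto
  then show ?case using Suc by simp
qed simp

lemma lapl_corrA_eq_corrA_diff:
  assumes "\<And>j. \<sigma> (j + int N) = \<sigma> j"
  shows "lapl (corrA N \<sigma>) f = - corrA N (\<lambda>j. \<sigma> (j + 1) - \<sigma> j) f / 4"
proof -
  have shift: "(\<Sum>j\<in>{0..<int N}. \<sigma> (j + 1) * \<sigma> (j + 1 + a)) = corrA N \<sigma> a" for a
    unfolding corrA_def
    by (rule sum_periodic_shift[where h = "\<lambda>j. \<sigma> j * \<sigma> (j + a)"])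
       (metis assms add.commute add.left_commute)
  have "corrA N (\<lambda>j. \<sigma> (j + 1) - \<sigma> j) f = (\<Sum>j\<in>{0..<int N}.
      \<sigma> (j + 1) * \<sigma> (j + 1 + f) - \<sigma> (j + 1) * \<sigma> (j + 1 + (f - 1)) - \<sigma> j * \<sigma> (j + (f + 1)) + \<sigma> j * \<sigma> (j + f))"
    unfolding corrA_def by (rule sum.cong) (auto simp: algebra_simps)
  also have "\<dots> = 2 * corrA N \<sigma> f - corrA N \<sigma> (f - 1) - corrA N \<sigma> (f + 1)"
    by (simp only: sum.distrib sum_subtractf shift) (simp add: corrA_def)
  finally show ?thesis unfolding lapl_def by simp
qed

lemma sum_deltaF_mult_deltaF:
  assumes "0 < N"
  shows "(\<Sum>j\<in>{0..<int N}. deltaF N a j * deltaF N b (j + f)) = deltaF N (b - a) f"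
proof -
  have "(\<Sum>j\<in>{0..<int N}. deltaF N a j * deltaF N b (j + f)) =
      (\<Sum>j\<in>{0..<int N}. if j = a mod int N then deltaF N b (a mod int N + f) else 0)"
    by (rule sum.cong) (auto simp: deltaF_def)
  also have "\<dots> = deltaF N b (a mod int N + f)"
    using assms by simp
  also have "\<dots> = deltaF N (b - a) f"
    unfolding deltaF_def by (metis add.commute diff_diff_eq mod_add_left_eq mod_eq_dvd_iff)
  finally show ?thesis .
qed

lemma corrA_sum_deltaF:
  assumes "0 < N" "finite S"
  shows "corrA N (\<lambda>j. \<Sum>l\<in>S. c l * deltaF N (p l) j) f =
    (\<Sum>l\<in>S. \<Sum>l'\<in>S. c l * c l' * deltaF N (p l' - p l) f)"
proof -
  have "corrA N (\<lambda>j. \<Sum>l\<in>S. c l * deltaF N (p l) j) f =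
      (\<Sum>l\<in>S. \<Sum>l'\<in>S. c l * c l' * (\<Sum>j\<in>{0..<int N}. deltaF N (p l) j * deltaF N (p l') (j + f)))"
    unfolding corrA_def sum_product
    by (subst sum.swap, rule sum.cong[OF refl], subst sum.swap)
       (simp add: sum_distrib_left mult_ac)
  then show ?thesis by (simp add: sum_deltaF_mult_deltaF[OF assms(1)])
qed

definition psum :: "(nat \<Rightarrow> nat) \<Rightarrow> nat \<Rightarrow> int" where
  "psum m l = int (\<Sum>i=1..l. m i)"

lemma psum_0 [simp]: "psum m 0 = 0"
  by (simp add: psum_def)

lemma psum_Suc: "psum m (Suc l) = psum m l + int (m (Suc l))"
  by (simp add: psum_def)

lemma psum_mono: "l \<le> l' \<Longrightarrow> psum m l \<le> psum m l'"
  unfolding psum_def by (simp add: sum_mono2)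

lemma block_config_eq_jump_sum:
  fixes \<sigma> :: "int \<Rightarrow> real"
  assumes m_sum: "(\<Sum>l=1..2*k. m l) = N"
    and blocks: "\<And>l j. l \<in> {1..2*k} \<Longrightarrow> int (\<Sum>i=1..l-1. m i) < j \<Longrightarrow>
                    j \<le> int (\<Sum>i=1..l. m i) \<Longrightarrow> \<sigma> j = (-1) ^ (l + 1)"
    and j: "1 \<le> j" "j \<le> int N"
  shows "\<sigma> j = 1 + (\<Sum>l=1..2*k. if psum m l < j then 2 * (-1) ^ l else 0)"
proof -
  have end_N: "psum m (2*k) = int N" using m_sum by (simp add: psum_def)
  define l where "l = (LEAST l. j \<le> psum m l)"
  have l_le: "l \<le> 2*k" unfolding l_def by (rule Least_le) (use end_N j in simp)
  have j_le: "j \<le> psum m l" unfolding l_def by (rule LeastI[of _ "2*k"]) (use end_N j in simp)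
  have l_pos: "1 \<le> l" using j_le j by (cases l) (auto simp: psum_def)
  have j_gt: "psum m (l - 1) < j"
    using not_less_Least[of "l - 1" "\<lambda>l. j \<le> psum m l"] l_pos unfolding l_def[symmetric] by linarith
  have below: "{i\<in>{1..2*k}. psum m i < j} = {1..l-1}"
  proof (intro set_eqI iffI)
    fix i assume "i \<in> {i\<in>{1..2*k}. psum m i < j}"
    moreover from this have "i < l" using psum_mono[of l i m] j_le by (cases "l \<le> i") auto
    ultimately show "i \<in> {1..l-1}" by auto
  qed (use psum_mono[of _ "l - 1" m] j_gt l_le in force)
  have "(\<Sum>i=1..2*k. if psum m i < j then 2 * (-1) ^ i else 0) = (\<Sum>i=1..l-1. 2 * (-1::real) ^ i)"
    by (simp only: sum.inter_filter[symmetric] finite_atLeastAtMost below)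
  also have "\<dots> = (-1) ^ (l + 1) - 1"
    using l_pos sum_alternating_sign[of "l - 1"] by (cases l) simp_all
  finally show ?thesis using blocks[of l j] l_pos l_le j_le j_gt by (simp add: psum_def)
qed

lemma block_config_diff_in_period:
  fixes \<sigma> :: "int \<Rightarrow> real"
  assumes N_pos: "0 < N"
    and m_sum: "(\<Sum>l=1..2*k. m l) = N"
    and periodic: "\<And>j. \<sigma> (j + int N) = \<sigma> j"
    and blocks: "\<And>l j. l \<in> {1..2*k} \<Longrightarrow> int (\<Sum>i=1..l-1. m i) < j \<Longrightarrow>
                    j \<le> int (\<Sum>i=1..l. m i) \<Longrightarrow> \<sigma> j = (-1) ^ (l + 1)"
    and j: "1 \<le> j" "j \<le> int N"
  shows "\<sigma> (j + 1) - \<sigma> j = (\<Sum>l=1..2*k. 2 * (-1) ^ l * deltaF N (psum m l) j)"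
proof -
  define c where "c l = 2 * (-1::real) ^ l" for l :: nat
  have range: "0 \<le> psum m l \<and> psum m l \<le> int N" if "l \<le> 2*k" for l
    using psum_mono[OF that, of m] m_sum by (simp add: psum_def sum_nonneg flip: of_nat_sum)
  have \<sigma>_eq: "\<sigma> i = 1 + (\<Sum>l=1..2*k. if psum m l < i then c l else 0)"
    if "1 \<le> i" "i \<le> int N" for i
    unfolding c_def by (rule block_config_eq_jump_sum[OF m_sum blocks that])
  show ?thesis
  proof (cases "j < int N")
    case True
    have "\<sigma> (j + 1) - \<sigma> j =
        (\<Sum>l=1..2*k. (if psum m l < j + 1 then c l else 0) - (if psum m l < j then c l else 0))"
      using \<sigma>_eq[of j] \<sigma>_eq[of "j + 1"] j True by (simp add: sum_subtractf)
    also have "\<dots> = (\<Sum>l=1..2*k. c l * deltaF N (psum m l) j)"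
    proof (rule sum.cong[OF refl])
      fix l assume "l \<in> {1..2*k}"
      then have "deltaF N (psum m l) j = (if psum m l = j then 1 else 0)"
        using range[of l] j True by (cases "psum m l = int N") (auto simp: deltaF_def)
      then show "(if psum m l < j + 1 then c l else 0) - (if psum m l < j then c l else 0) =
          c l * deltaF N (psum m l) j" by auto
    qed
    finally show ?thesis by (simp add: c_def)
  next
    case False
    then have j_N: "j = int N" using j by simp
    have "\<sigma> (j + 1) - \<sigma> j = \<sigma> 1 - \<sigma> (int N)" using periodic[of 1] j_N by (simp add: add.commute)
    also have "\<dots> = (\<Sum>l=1..2*k.
        (if psum m l < 1 then c l else 0) - (if psum m l < int N then c l else 0) + c l)"
      using \<sigma>_eq[of 1] \<sigma>_eq[of "int N"] N_pos sum_alternating_sign[of "2*k"]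
      by (simp add: c_def sum_subtractf sum.distrib)
    also have "\<dots> = (\<Sum>l=1..2*k. c l * deltaF N (psum m l) j)"
    proof (rule sum.cong[OF refl])
      fix l assume "l \<in> {1..2*k}"
      then show "(if psum m l < 1 then c l else 0) - (if psum m l < int N then c l else 0) + c l =
          c l * deltaF N (psum m l) j"
        using range[of l] j_N N_pos by (cases "psum m l = 0 \<or> psum m l = int N") (auto simp: deltaF_def)
    qed
    finally show ?thesis by (simp add: c_def)
  qed
qed

lemma block_config_diff_eq_deltaF:
  fixes \<sigma> :: "int \<Rightarrow> real"
  assumes N_pos: "0 < N"
    and m_sum: "(\<Sum>l=1..2*k. m l) = N"
    and periodic: "\<And>j. \<sigma> (j + int N) = \<sigma> j"
    and blocks: "\<And>l j. l \<in> {1..2*k} \<Longrightarrow> int (\<Sum>i=1..l-1. m i) < j \<Longrightarrow>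
                    j \<le> int (\<Sum>i=1..l. m i) \<Longrightarrow> \<sigma> j = (-1) ^ (l + 1)"
  shows "\<sigma> (j + 1) - \<sigma> j = (\<Sum>l=1..2*k. 2 * (-1) ^ l * deltaF N (psum m l) j)"
proof -
  define D where "D i = \<sigma> (i + 1) - \<sigma> i" for i
  define R where "R i = (\<Sum>l=1..2*k. 2 * (-1) ^ l * deltaF N (psum m l) i)" for i
  have D_periodic: "D (x + int N) = D x" for x
    using periodic[of x] periodic[of "x + 1"] by (simp add: D_def algebra_simps)
  have R_periodic: "R (x + int N) = R x" for x
    by (simp add: R_def deltaF_def)
  have "D j = D ((j - 1) mod int N + 1)"
    using periodic_mod[where h = "\<lambda>x. D (x + 1)" and p = "int N", of "j - 1"]
    by (metis D_periodic add.commute add.left_commute diff_add_cancel)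
  also have "\<dots> = R ((j - 1) mod int N + 1)"
    unfolding D_def R_def
    using N_pos pos_mod_sign[of "int N" "j - 1"] pos_mod_bound[of "int N" "j - 1"]
    by (intro block_config_diff_in_period[where \<sigma> = \<sigma>, OF N_pos m_sum periodic blocks]) linarith+
  also have "\<dots> = R j"
    using periodic_mod[where h = "\<lambda>x. R (x + 1)" and p = "int N", of "j - 1"]
    by (metis R_periodic add.commute add.left_commute diff_add_cancel)
  finally show ?thesis by (simp add: D_def R_def)
qed

definition cyc_psum :: "nat \<Rightarrow> (nat \<Rightarrow> nat) \<Rightarrow> int \<Rightarrow> int" where
  "cyc_psum k m t = psum m (2*k) * (t div int (2*k)) + psum m (nat (t mod int (2*k)))"

lemma cyc_psum_add_period: "cyc_psum k m (t + int (2*k)) = cyc_psum k m t + psum m (2*k)"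
  by (cases "k = 0") (simp_all add: cyc_psum_def psum_def algebra_simps)

lemma cyc_psum_of_nat:
  assumes "l \<le> 2*k"
  shows "cyc_psum k m (int l) = psum m l"
proof (cases "l = 2*k")
  case True
  then show ?thesis by (cases "k = 0") (simp_all add: cyc_psum_def)
qed (use assms in \<open>simp add: cyc_psum_def\<close>)

lemma cyc_psum_succ:
  assumes "0 < k"
  shows "cyc_psum k m (t + 1) = cyc_psum k m t + int (m (cyc k (t + 1)))"
proof -
  define K where "K = int (2*k)"
  define q where "q = t div K"
  define r where "r = t mod K"
  have K: "2 \<le> K" using assms by (simp add: K_def)
  have r: "0 \<le> r" "r < K" using K by (simp_all add: r_def)
  have t: "t + 1 = q * K + (r + 1)" by (simp add: q_def r_def)
  have Q_t: "cyc_psum k m t = psum m (2*k) * q + psum m (nat r)"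
    by (simp add: cyc_psum_def q_def r_def K_def)
  have cyc: "cyc k (t + 1) = Suc (nat r)"
    using r by (simp add: cyc_def r_def K_def nat_add_distrib)
  show ?thesis
  proof (cases "r + 1 < K")
    case True
    then have "(t + 1) div K = q" "(t + 1) mod K = r + 1"
      unfolding t using r by simp_all
    then have "cyc_psum k m (t + 1) = psum m (2*k) * q + psum m (Suc (nat r))"
      unfolding cyc_psum_def K_def[symmetric] using r by (simp add: nat_add_distrib)
    then show ?thesis using Q_t cyc by (simp add: psum_Suc)
  next
    case False
    then have last: "Suc (nat r) = 2*k" using r by (simp add: K_def)
    have "r + 1 = K" using False r by simp
    then have "(t + 1) div K = q + 1" "(t + 1) mod K = 0"
      unfolding t using K by simp_all
    then have "cyc_psum k m (t + 1) = psum m (2*k) * (q + 1)"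
      unfolding cyc_psum_def K_def[symmetric] by simp
    then show ?thesis using Q_t cyc psum_Suc[of m "nat r"] by (simp add: last algebra_simps)
  qed
qed

lemma segsum_cyc_psum:
  assumes "0 < k"
  shows "segsum k m l r = cyc_psum k m (int r + (int l - 1)) - cyc_psum k m (int l - 1)"
proof (induction r)
  case (Suc r)
  then show ?case
    using cyc_psum_succ[OF assms, where t = "int r + (int l - 1)"] by (simp add: segsum_def algebra_simps)
qed (simp add: segsum_def)

lemma sum_periodic_square_shear:
  fixes G :: "int \<Rightarrow> int \<Rightarrow> 'a::comm_monoid_add"
  assumes G_periodic: "\<And>a b. G (a + int n) b = G a b" "\<And>a b. G a (b + int n) = G a b"
  shows "(\<Sum>l=1..n. \<Sum>r=1..n. G (int l - 1) (int r + (int l - 1))) =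
    (\<Sum>l=1..n. \<Sum>l'=1..n. G (int l) (int l'))"
proof -
  define H where "H a = (\<Sum>b\<in>{0..<int n}. G a b)" for a
  have H_periodic: "H (a + int n) = H a" for a
    by (simp add: H_def G_periodic)
  have shifted_row: "(\<Sum>r=1..n. G a (int r + a)) = H a" for a
  proof -
    have "(\<Sum>r=1..n. G a (int r + a)) = (\<Sum>j\<in>{0..<int n}. G a (j + a))"
      by (rule sum_periodic_atLeastAtMost_nat) (use G_periodic(2)[of a "_ + a"] in \<open>simp add: ac_simps\<close>)
    also have "\<dots> = H a"
      unfolding H_def by (rule sum_periodic_shift) (rule G_periodic(2))
    finally show ?thesis .
  qed
  have "(\<Sum>l=1..n. \<Sum>r=1..n. G (int l - 1) (int r + (int l - 1))) = (\<Sum>l=1..n. H (int l - 1))"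
    by (intro sum.cong refl shifted_row)
  also have "\<dots> = (\<Sum>j\<in>{0..<int n}. H (j - 1))"
    by (rule sum_periodic_atLeastAtMost_nat) (use H_periodic[of "_ - 1"] in \<open>simp add: algebra_simps\<close>)
  also have "\<dots> = (\<Sum>a\<in>{0..<int n}. H a)"
    using sum_periodic_shift[where h = H and a = "-1"] H_periodic by simp
  also have "\<dots> = (\<Sum>l=1..n. H (int l))"
    by (rule sum_periodic_atLeastAtMost_nat[symmetric]) (rule H_periodic)
  also have "\<dots> = (\<Sum>l=1..n. \<Sum>l'=1..n. G (int l) (int l'))"
    unfolding H_def by (intro sum.cong refl sum_periodic_atLeastAtMost_nat[symmetric] G_periodic(2))
  finally show ?thesis .
qed

lemma sum_alternating_segsum:
  fixes \<phi> :: "int \<Rightarrow> real"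
  assumes k: "0 < k" and \<phi>_periodic: "\<And>x. \<phi> (x + psum m (2*k)) = \<phi> x"
  shows "(\<Sum>l=1..2*k. \<Sum>r=1..2*k. (-1) ^ (r + 1) * \<phi> (segsum k m l r)) =
    - (\<Sum>l=1..2*k. \<Sum>l'=1..2*k. (-1) ^ (l + l') * \<phi> (psum m l' - psum m l))"
proof -
  define K where "K = int (2*k)"
  define sgn where "sgn t = (if even t then 1 else -1 :: real)" for t :: int
  define G where "G a b = sgn (a + b) * \<phi> (cyc_psum k m b - cyc_psum k m a)" for a b
  have Q_periodic: "cyc_psum k m (t + K) = cyc_psum k m t + psum m (2*k)" for t
    unfolding K_def by (rule cyc_psum_add_period)
  have sgn_periodic: "sgn (t + K) = sgn t" for t
    by (simp add: sgn_def K_def)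
  have \<phi>_periodic': "\<phi> (x - psum m (2*k)) = \<phi> x" for x
    using \<phi>_periodic[of "x - psum m (2*k)"] by simp
  have G_periodic: "G (a + K) b = G a b" "G a (b + K) = G a b" for a b
  proof -
    have "a + K + b = (a + b) + K" "a + (b + K) = (a + b) + K"
      "cyc_psum k m b - cyc_psum k m (a + K) = (cyc_psum k m b - cyc_psum k m a) - psum m (2*k)"
      "cyc_psum k m (b + K) - cyc_psum k m a = (cyc_psum k m b - cyc_psum k m a) + psum m (2*k)"
      by (simp_all add: Q_periodic)
    then show "G (a + K) b = G a b" "G a (b + K) = G a b"
      unfolding G_def by (simp_all only: sgn_periodic \<phi>_periodic \<phi>_periodic')
  qed
  have "(\<Sum>l=1..2*k. \<Sum>r=1..2*k. (-1) ^ (r + 1) * \<phi> (segsum k m l r)) =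
      - (\<Sum>l=1..2*k. \<Sum>r=1..2*k. G (int l - 1) (int r + (int l - 1)))"
    by (simp add: G_def segsum_cyc_psum[OF k] sgn_def minus_one_power_iff sum_negf flip: sum_distrib_left)
  also have "(\<Sum>l=1..2*k. \<Sum>r=1..2*k. G (int l - 1) (int r + (int l - 1))) =
      (\<Sum>l=1..2*k. \<Sum>l'=1..2*k. G (int l) (int l'))"
    by (rule sum_periodic_square_shear) (use G_periodic in \<open>simp_all add: K_def\<close>)
  also have "\<dots> = (\<Sum>l=1..2*k. \<Sum>l'=1..2*k. (-1) ^ (l + l') * \<phi> (psum m l' - psum m l))"
    by (intro sum.cong refl) (simp add: G_def cyc_psum_of_nat sgn_def minus_one_power_iff)
  finally show ?thesis .
qed

theorem mainTheorem9:
  fixes N k :: nat and m :: "nat \<Rightarrow> nat" and \<sigma> :: "int \<Rightarrow> real"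
  assumes N_pos: "0 < N"
    and m_sum: "(\<Sum>l=1..2*k. m l) = N"
    and periodic: "\<And>j. \<sigma> (j + int N) = \<sigma> j"
    and blocks: "\<And>l j. l \<in> {1..2*k} \<Longrightarrow> int (\<Sum>i=1..l-1. m i) < j \<Longrightarrow>
                    j \<le> int (\<Sum>i=1..l. m i) \<Longrightarrow> \<sigma> j = (-1) ^ (l + 1)"
  shows "lapl (corrA N \<sigma>) =
    (\<lambda>f. \<Sum>l=1..2*k. \<Sum>n=1..k.
        deltaF N (segsum k m l (2*n - 1)) f - deltaF N (segsum k m l (2*n)) f)"
proof
  fix f
  have k_pos: "0 < k" using m_sum N_pos by (cases k) auto
  have jumps: "(\<lambda>j. \<sigma> (j + 1) - \<sigma> j) = (\<lambda>j. \<Sum>l=1..2*k. 2 * (-1) ^ l * deltaF N (psum m l) j)"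
    using block_config_diff_eq_deltaF[where \<sigma> = \<sigma>, OF N_pos m_sum periodic blocks] by blast
  have "lapl (corrA N \<sigma>) f = - corrA N (\<lambda>j. \<sigma> (j + 1) - \<sigma> j) f / 4"
    by (rule lapl_corrA_eq_corrA_diff) (rule periodic)
  also have "\<dots> = - (\<Sum>l=1..2*k. \<Sum>l'=1..2*k. (-1) ^ (l + l') * deltaF N (psum m l' - psum m l) f)"
    unfolding jumps corrA_sum_deltaF[OF N_pos finite_atLeastAtMost]
    by (simp add: power_add sum_distrib_left sum_divide_distrib mult_ac)
  also have "\<dots> = (\<Sum>l=1..2*k. \<Sum>r=1..2*k. (-1) ^ (r + 1) * deltaF N (segsum k m l r) f)"
    using m_sum by (subst sum_alternating_segsum[OF k_pos]) (simp_all add: psum_def deltaF_def)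
  also have "\<dots> = (\<Sum>l=1..2*k. \<Sum>n=1..k.
      deltaF N (segsum k m l (2*n - 1)) f - deltaF N (segsum k m l (2*n)) f)"
    by (intro sum.cong refl sum_alternating_pairs[symmetric])
  finally show "lapl (corrA N \<sigma>) f = \<dots>" .
qed

end
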